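(* Let $n=2m+1\ge3$, $I\subset\{0,\dots,m\}$ nonempty, $d\in\mathbb Z$, and let $(v_i)_{i\in n\mathbb Z\pm I}$ be a $d$-face of type $I$ with $\mu_i=v_i-\omega_i$. Let $i\in I$ and $\mu\in\{\mu_i,\mu_{-i}\}$, and suppose that $\mu(j)+\mu(j^* )=d$ holds for all $j\in A_i$, or for all $j\in B_i$. Then $\mu$ is self-dual, i.e. $\mu+\mu^*=\mathbf d$ (equivalently $\mu_i=\mu_{-i}$).
   Context: For $v\in\mathbb Z^n$ write $v(j)$ for its $j$-th entry, $\Sigma v$ for the sum of its entries, $v^*$ for the vector with $v^*(j)=v(n+1-j)$, $\mathbf d=(d,\dots,d)$, and $v\ge w$ if $v(j)\ge w(j)$ for all $j$; $j^*=n+1-j$, $A_i=\{1,\dots,i\}\cup\{i^*,\dots,n\}$, $B_i=\{i+1,\dots,n-i\}$. The index set $n\mathbb Z\pm I$ is the set of integers congruent mod $n$ to an element of $I\cup(-I)$. A $d$-face of type $I$ is a family $(v_i)_{i\in n\mathbb Z\pm I}$ of vectors in $\mathbb Z^n$ with: (F1) $v_{i+n}=v_i-\mathbf 1$; (F2) $v_i\ge v_j$ whenever $i\le j$; (F3) $\Sigma v_i-\Sigma v_j=j-i$; (F4) $v_i+v_{-i}^*=\mathbf d$, for all indices $i,j$. For $i=nb+c$ with $b\in\mathbb Z$, $0\le c<n$, $\omega_i=((-1)^{(c)},0^{(n-c)})-\mathbf b$, where $(x^{(p)},y^{(q)})$ denotes $x$ repeated $p$ times followed by $y$ repeated $q$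 times. *)

theory Defs
  imports Main
begin

text \<open>Vectors in Z^n are modelled as functions nat => int; only the entries
  1..n are meaningful. Families (v_i) are functions int => (nat => int).\<close>

definition vge :: "nat \<Rightarrow> (nat \<Rightarrow> int) \<Rightarrow> (nat \<Rightarrow> int) \<Rightarrow> bool" where
  "vge n v w \<longleftrightarrow> (\<forall>j\<in>{1..n}. v j \<ge> w j)"

definition vsum :: "nat \<Rightarrow> (nat \<Rightarrow> int) \<Rightarrow> int" where
  "vsum n v = (\<Sum>j=1..n. v j)"

definition vstar :: "nat \<Rightarrow> (nat \<Rightarrow> int) \<Rightarrow> (nat \<Rightarrow> int)" where
  "vstar n v = (\<lambda>j. v (n + 1 - j))"

definition idxset :: "nat \<Rightarrow> nat set \<Rightarrow> int set" where
  "idxset n I = {i. \<exists>k\<in>I. i mod int n = int k mod int n \<or> i mod int n = (- int k) mod int n}"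

definition dface :: "nat \<Rightarrow> nat set \<Rightarrow> int \<Rightarrow> (int \<Rightarrow> nat \<Rightarrow> int) \<Rightarrow> bool" where
  "dface n I d V \<longleftrightarrow>
     (\<forall>i\<in>idxset n I. \<forall>j\<in>{1..n}. V (i + int n) j = V i j - 1) \<and>
     (\<forall>i\<in>idxset n I. \<forall>k\<in>idxset n I. i \<le> k \<longrightarrow> vge n (V i) (V k)) \<and>
     (\<forall>i\<in>idxset n I. \<forall>k\<in>idxset n I. vsum n (V i) - vsum n (V k) = k - i) \<and>
     (\<forall>i\<in>idxset n I. \<forall>j\<in>{1..n}. V i j + vstar n (V (- i)) j = d)"

definition omega :: "nat \<Rightarrow> int \<Rightarrow> nat \<Rightarrow> int" where
  "omega n i = (\<lambda>j. (if int j \<le> i mod int n then -1 else 0) - i div int n)"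

definition mu :: "nat \<Rightarrow> (int \<Rightarrow> nat \<Rightarrow> int) \<Rightarrow> int \<Rightarrow> nat \<Rightarrow> int" where
  "mu n V i = (\<lambda>j. V i j - omega n i j)"

definition Aset :: "nat \<Rightarrow> nat \<Rightarrow> nat set" where
  "Aset n i = {1..i} \<union> {n + 1 - i..n}"

definition Bset :: "nat \<Rightarrow> nat \<Rightarrow> nat set" where
  "Bset n i = {i + 1..n - i}"

end

theory Submission
  imports Defs
begin

text \<open>Since \<open>\<omega>(-k) = - \<omega>(k)\<^sup>*\<close>, the vectors \<open>\<mu>(k)\<close> inherit (F4):
  \<open>\<mu>(k) + \<mu>(-k)\<^sup>* = d\<close>. Hence \<open>\<mu>(j) + \<mu>(j\<^sup>*) = d\<close> holds exactly when
  \<open>\<mu>(i)(j\<^sup>*) = \<mu>(-i)(j\<^sup>*)\<close>, and both hypothesis sets are closed under \<open>j \<mapsto> j\<^sup>*\<close>,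
  so it suffices to show that \<open>E = \<mu>(-i) - \<mu>(i)\<close> vanishes.
  Now \<open>E = (v(-i) - v(i)) - 1\<^bsub>A(i)\<^esub>\<close> and \<open>v(-i) \<ge> v(i) \<ge> v(n - i) = v(-i) - 1\<close> by (F1),
  (F2), so \<open>E \<le> 0\<close> on \<open>A(i)\<close> and \<open>E \<ge> 0\<close> on its complement \<open>B(i)\<close>. Finally
  \<open>\<Sigma>E = 0\<close>: as \<open>\<Sigma>\<omega>(k) = -k\<close>, the sum \<open>\<Sigma>\<mu>(k) = \<Sigma>v(k) + k\<close> is constant by (F3).
  So \<open>E\<close> vanishing on \<open>A(i)\<close> or on \<open>B(i)\<close> forces \<open>E = 0\<close>.\<close>

lemma omega_uminus:
  assumes "0 < n" "j \<in> {1..n}"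
  shows "omega n (- k) j = - omega n k (n + 1 - j)"
  using assms by (auto simp: omega_def zmod_zminus1_eq_if zdiv_zminus1_eq_if)

lemma omega_of_nat:
  assumes "i < n"
  shows "omega n (int i) j = - of_bool (j \<le> i)"
  using assms by (simp add: omega_def)

lemma vsum_omega:
  assumes "0 < n"
  shows "vsum n (omega n k) = - k"
proof -
  have "k mod int n < int n" "0 \<le> k mod int n" using assms by simp_all
  then have "{1..n} \<inter> {j. int j \<le> k mod int n} = {1..nat (k mod int n)}"
    by auto
  then have "(\<Sum>j=1..n. if int j \<le> k mod int n then -1 else 0 :: int) = - (k mod int n)"
    using assms by (simp add: sum.If_cases)
  then show ?thesis
    unfolding vsum_def omega_def sum_subtractf
    by (simp add: minus_mult_div_eq_mod[of k "int n", symmetric] algebra_simps)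
qed

lemma mem_idxset: "k \<in> I \<Longrightarrow> int k \<in> idxset n I" "k \<in> I \<Longrightarrow> - int k \<in> idxset n I"
  unfolding idxset_def by blast+

lemma idxset_add_n: "k \<in> idxset n I \<Longrightarrow> k + int n \<in> idxset n I"
  unfolding idxset_def by simp

lemma dface_mu_dual:
  assumes "dface n I d V" "k \<in> idxset n I" "j \<in> {1..n}"
  shows "mu n V k j + mu n V (- k) (n + 1 - j) = d"
proof -
  have "V k j + V (- k) (n + 1 - j) = d"
    using assms unfolding dface_def vstar_def by blast
  moreover have "omega n (- k) (n + 1 - j) = - omega n k (n + 1 - (n + 1 - j))"
    using assms(3) by (intro omega_uminus) auto
  then have "omega n (- k) (n + 1 - j) = - omega n k j"
    using assms(3) by simp
  ultimately show ?thesis unfolding mu_def by simp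
qed

lemma dface_vsum_mu_eq:
  assumes "dface n I d V" "0 < n" "k \<in> idxset n I" "l \<in> idxset n I"
  shows "vsum n (mu n V k) = vsum n (mu n V l)"
proof -
  have "vsum n (mu n V k) = vsum n (V k) + k" for k
    using vsum_omega[OF \<open>0 < n\<close>, of k] unfolding vsum_def mu_def by (simp add: sum_subtractf)
  then show ?thesis using assms unfolding dface_def by fastforce
qed

lemma dface_le_uminus_le_add_one:
  assumes "dface n I d V" "i \<in> I" "2 * i \<le> n" "j \<in> {1..n}"
  shows "V (int i) j \<le> V (- int i) j" "V (- int i) j \<le> V (int i) j + 1"
proof -
  have mono: "\<And>k l. k \<in> idxset n I \<Longrightarrow> l \<in> idxset n I \<Longrightarrow> k \<le> l \<Longrightarrow> V l j \<le> V k j"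
    using assms(1,4) unfolding dface_def vge_def by blast
  have shift: "V (- int i + int n) j = V (- int i) j - 1"
    using assms(1,4) mem_idxset(2)[OF assms(2)] unfolding dface_def by blast
  show "V (int i) j \<le> V (- int i) j"
    using mono[OF mem_idxset(2,1)[OF assms(2)]] by simp
  show "V (- int i) j \<le> V (int i) j + 1"
    using mono[OF mem_idxset(1) idxset_add_n[OF mem_idxset(2)], OF assms(2) assms(2)] assms(3) shift
    by simp
qed

lemma sum_eq_0_sign_split:
  fixes E :: "'a \<Rightarrow> 'b::ordered_ab_group_add"
  assumes "finite S" "A \<subseteq> S"
    and "\<forall>j\<in>A. E j \<le> 0" "\<forall>j\<in>S - A. 0 \<le> E j" "sum E S = 0"
    and "(\<forall>j\<in>A. E j = 0) \<or> (\<forall>j\<in>S - A. E j = 0)"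
  shows "\<forall>j\<in>S. E j = 0"
proof -
  have fin: "finite A" "finite (S - A)" using assms(1,2) finite_subset by auto
  have split: "sum E A + sum E (S - A) = 0"
    using assms(1,2,5) by (metis sum.subset_diff add.commute)
  from assms(6) show ?thesis
  proof
    assume A0: "\<forall>j\<in>A. E j = 0"
    then have "sum E (S - A) = 0" using split by simp
    then show ?thesis using A0 assms(4) fin(2) sum_nonneg_eq_0_iff by blast
  next
    assume SA0: "\<forall>j\<in>S - A. E j = 0"
    then have "sum (\<lambda>j. - E j) A = 0" using split by (simp add: sum_negf)
    then have "\<forall>j\<in>A. - E j = 0" using assms(3) fin(1) sum_nonneg_eq_0_iff[of A "\<lambda>j. - E j"] by simp
    then show ?thesis using SA0 by auto
  qed
qed

lemma dface_mu_pair_sum_eq_iff: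
  assumes "dface n I d V" "i \<in> I" "s \<in> {int i, - int i}" "j \<in> {1..n}"
  shows "mu n V s j + mu n V s (n + 1 - j) = d
    \<longleftrightarrow> mu n V (int i) (n + 1 - j) = mu n V (- int i) (n + 1 - j)"
proof -
  have "s \<in> idxset n I" using assms(2,3) mem_idxset by auto
  then have "mu n V s j + mu n V (- s) (n + 1 - j) = d" using dface_mu_dual assms(1,4) by blast
  then show ?thesis using assms(3) by auto
qed

lemma dface_mu_compare_Aset:
  assumes "dface n I d V" "i \<in> I" "2 * i \<le> n" "j \<in> {1..n}"
  shows "j \<in> Aset n i \<Longrightarrow> mu n V (- int i) j \<le> mu n V (int i) j"
    and "j \<notin> Aset n i \<Longrightarrow> mu n V (int i) j \<le> mu n V (- int i) j"
proof -
  have "i < n" using assms(3,4) by auto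
  have "omega n (- int i) j = - omega n (int i) (n + 1 - j)"
    using assms(4) by (intro omega_uminus) auto
  then have "omega n (- int i) j - omega n (int i) j = of_bool (n + 1 - j \<le> i) + of_bool (j \<le> i)"
    using omega_of_nat[OF \<open>i < n\<close>] by simp
  also have "\<dots> = of_bool (j \<in> Aset n i)"
    using assms(3,4) unfolding Aset_def by auto
  finally have "mu n V (- int i) j - mu n V (int i) j
      = V (- int i) j - V (int i) j - of_bool (j \<in> Aset n i)"
    unfolding mu_def by simp
  then show "j \<in> Aset n i \<Longrightarrow> mu n V (- int i) j \<le> mu n V (int i) j"
    and "j \<notin> Aset n i \<Longrightarrow> mu n V (int i) j \<le> mu n V (- int i) j"
    using dface_le_uminus_le_add_one[OF assms] by auto
qed

lemma Aset_reflect_iff: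
  assumes "i \<le> n" "j \<in> {1..n}"
  shows "n + 1 - j \<in> Aset n i \<longleftrightarrow> j \<in> Aset n i"
  using assms unfolding Aset_def by auto

lemma Bset_eq_Diff_Aset:
  assumes "2 * i \<le> n"
  shows "Bset n i = {1..n} - Aset n i"
  using assms unfolding Aset_def Bset_def by auto

theorem lemma5p3p6:
  fixes n m :: nat and I :: "nat set" and d :: int and V :: "int \<Rightarrow> nat \<Rightarrow> int"
    and i :: nat and s :: int
  assumes "n = 2 * m + 1" and "n \<ge> 3"
    and "I \<subseteq> {0..m}" and "I \<noteq> {}"
    and "dface n I d V"
    and "i \<in> I" and "s \<in> {int i, - int i}"
    and "(\<forall>j\<in>Aset n i. mu n V s j + mu n V s (n + 1 - j) = d)
       \<or> (\<forall>j\<in>Bset n i. mu n V s j + mu n V s (n + 1 - j) = d)"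
  shows "\<forall>j\<in>{1..n}. mu n V s j + vstar n (mu n V s) j = d"
proof -
  have "0 < n" "2 * i \<le> n" using assms(1,3,6) by auto
  let ?A = "Aset n i"
  have A_sub: "?A \<subseteq> {1..n}" using \<open>2 * i \<le> n\<close> unfolding Aset_def by auto
  obtain X where X: "X = ?A \<or> X = {1..n} - ?A" and "X \<subseteq> {1..n}"
    and pair_X: "\<forall>j\<in>X. mu n V s j + mu n V s (n + 1 - j) = d"
    using assms(8) A_sub Bset_eq_Diff_Aset[OF \<open>2 * i \<le> n\<close>] by blast
  have "\<forall>j\<in>X. mu n V (int i) j = mu n V (- int i) j"
  proof
    fix j assume "j \<in> X"
    then have "n + 1 - j \<in> X" "n + 1 - (n + 1 - j) = j"
      using X \<open>X \<subseteq> {1..n}\<close> Aset_reflect_iff[of i n j] \<open>2 * i \<le> n\<close> by auto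
    then show "mu n V (int i) j = mu n V (- int i) j"
      using pair_X dface_mu_pair_sum_eq_iff[OF assms(5,6,7)] \<open>X \<subseteq> {1..n}\<close> by fastforce
  qed
  then have mu_eq: "\<forall>j\<in>{1..n}. mu n V (- int i) j - mu n V (int i) j = 0"
    using dface_mu_compare_Aset[OF assms(5,6) \<open>2 * i \<le> n\<close>] X A_sub
      dface_vsum_mu_eq[OF assms(5) \<open>0 < n\<close> mem_idxset[OF assms(6)]]
    by (intro sum_eq_0_sign_split[where A = ?A]) (auto simp: vsum_def sum_subtractf)
  show ?thesis
  proof
    fix j assume "j \<in> {1..n}"
    moreover have "n + 1 - j \<in> {1..n}" using \<open>j \<in> {1..n}\<close> by auto
    ultimately show "mu n V s j + vstar n (mu n V s) j = d"
      using mu_eq dface_mu_pair_sum_eq_iff[OF assms(5,6,7)] unfolding vstar_def by auto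
  qed
qed

end
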